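(* Let $A,B\in\mathcal A_n$ with $A<B$ in ASM order. Then $\mathbf x^A-\mathbf x^B=L(x)\,M(x)$, where $L(x)=\prod_{i,j}x_{ij}^{c_{ij}}$ is a Laurent monomial with all $c_{ij}\ge-1$, and $M(x)$ is a polynomial with nonnegative coefficients and zero constant term in minors of $x$ of size $1$ or $2$ whose row indices are consecutive and whose column indices are consecutive.
   Context: $\mathcal A_n$ is the set of $n\times n$ alternating sign matrices (entries in $\{-1,0,1\}$, partial row and column sums in $\{0,1\}$, full row and column sums $1$). Corner sum matrix $\widetilde A(i,j)=\sum_{p\le i,q\le j}a_{pq}$; ASM order: $A\le B$ iff $\widetilde A(i,j)\ge\widetilde B(i,j)$ for all $i,j$, and $A<B$ means $A\le B$, $A\ne B$. $x=(x_{ij})$ is a matrix of commuting indeterminates, $\mathbf x^A=\prod_{i,j}x_{ij}^{a_{ij}}$. *)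

theory Defs
  imports Complex_Main "HOL-Library.Multiset"
begin

text \<open>Matrices are functions nat => nat => _ indexed by 0..n-1 (rows, columns).\<close>

definition is_ASM :: "nat \<Rightarrow> (nat \<Rightarrow> nat \<Rightarrow> int) \<Rightarrow> bool" where
  "is_ASM n A \<longleftrightarrow>
     (\<forall>i j. (i \<ge> n \<or> j \<ge> n) \<longrightarrow> A i j = 0) \<and>
     (\<forall>i<n. \<forall>j<n. A i j \<in> {-1, 0, 1}) \<and>
     (\<forall>i<n. \<forall>j<n. (\<Sum>q\<le>j. A i q) \<in> {0, 1}) \<and>
     (\<forall>j<n. \<forall>i<n. (\<Sum>p\<le>i. A p j) \<in> {0, 1}) \<and>
     (\<forall>i<n. (\<Sum>q<n. A i q) = 1) \<and>
     (\<forall>j<n. (\<Sum>p<n. A p j) = 1)"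

definition corner_sum :: "(nat \<Rightarrow> nat \<Rightarrow> int) \<Rightarrow> nat \<Rightarrow> nat \<Rightarrow> int" where
  "corner_sum A i j = (\<Sum>p\<le>i. \<Sum>q\<le>j. A p q)"

definition asm_le :: "nat \<Rightarrow> (nat \<Rightarrow> nat \<Rightarrow> int) \<Rightarrow> (nat \<Rightarrow> nat \<Rightarrow> int) \<Rightarrow> bool" where
  "asm_le n A B \<longleftrightarrow> (\<forall>i<n. \<forall>j<n. corner_sum A i j \<ge> corner_sum B i j)"

definition asm_less :: "nat \<Rightarrow> (nat \<Rightarrow> nat \<Rightarrow> int) \<Rightarrow> (nat \<Rightarrow> nat \<Rightarrow> int) \<Rightarrow> bool" where
  "asm_less n A B \<longleftrightarrow> asm_le n A B \<and> A \<noteq> B"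

definition laurent_mono :: "nat \<Rightarrow> (nat \<Rightarrow> nat \<Rightarrow> int) \<Rightarrow> (nat \<Rightarrow> nat \<Rightarrow> real) \<Rightarrow> real" where
  "laurent_mono n C x = (\<Prod>i<n. \<Prod>j<n. x i j powi C i j)"

datatype minor = Minor1 nat nat | Minor2 nat nat

fun valid_minor :: "nat \<Rightarrow> minor \<Rightarrow> bool" where
  "valid_minor n (Minor1 i j) \<longleftrightarrow> i < n \<and> j < n"
| "valid_minor n (Minor2 i j) \<longleftrightarrow> i + 1 < n \<and> j + 1 < n"

fun minor_val :: "minor \<Rightarrow> (nat \<Rightarrow> nat \<Rightarrow> real) \<Rightarrow> real" where
  "minor_val (Minor1 i j) x = x i j"
| "minor_val (Minor2 i j) x = x i j * x (i+1) (j+1) - x i (j+1) * x (i+1) j"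

text \<open>A polynomial in the minors: coefficient function on monomials (multisets of minors),
  finitely supported. Its value at x:\<close>
definition minor_poly_val :: "(minor multiset \<Rightarrow> nat) \<Rightarrow> (nat \<Rightarrow> nat \<Rightarrow> real) \<Rightarrow> real" where
  "minor_poly_val c x = (\<Sum>m\<in>{m. c m \<noteq> 0}. real (c m) * (\<Prod>\<mu>\<in>#m. minor_val \<mu> x))"

definition good_minor_poly :: "nat \<Rightarrow> (minor multiset \<Rightarrow> nat) \<Rightarrow> bool" where
  "good_minor_poly n c \<longleftrightarrow>
     finite {m. c m \<noteq> 0} \<and>
     (\<forall>m. c m \<noteq> 0 \<longrightarrow> (\<forall>\<mu>\<in>#m. valid_minor n \<mu>)) \<and>
     c {#} = 0"

end

theory Submission
  imports Defs "HOL-Library.Product_Lexorder"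
begin

text \<open>
  Induction on the total excess of the corner sums of A over those of B. If A < B, take a
  position (i, j) where the corner sum of A exceeds that of B, with maximal excess, then
  maximal corner sum of A, then minimal i + j. Such a position admits the elementary move
  adding -1 at (i, j), (i+1, j+1) and +1 at (i, j+1), (i+1, j): the result A' is again an
  ASM with A' \<le> B, and its corner sums are those of A lowered by one exactly at (i, j).
  Moreover x^A - x^A' = x^E (x_ij x_(i+1)(j+1) - x_i(j+1) x_(i+1)j) where E = A minus the
  unit matrices at (i, j) and (i+1, j+1) has all entries at least -1. Finally a sum
  x^C M + x^C' M' of two such factorisations is again one, with exponent min(C, C'): the
  leftover monomials x^(C - min(C, C')) have nonnegative exponents, so they are products of
  1 \<times> 1 minors.
\<close>

lemma prod_mset_image_sum:
  "(\<Prod>x\<in>#(\<Sum>a\<in>S. M a). g x) = (\<Prod>a\<in>S. \<Prod>x\<in>#M a. g x)"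
  by (induction S rule: infinite_finite_induct) auto

lemma sum_mset_image_eq_sum_count:
  "(\<Sum>x\<in>#M. f x) = (\<Sum>x\<in>set_mset M. of_nat (count M x) * (f x :: 'b :: semiring_1))"
proof -
  have "(\<Sum>x\<in>#M. f x) = (\<Sum>x\<in>#M. \<Sum>y\<in>set_mset M. if y = x then f y else 0)"
    by (intro arg_cong[where f = sum_mset] image_mset_cong) simp
  also have "\<dots> = (\<Sum>y\<in>set_mset M. \<Sum>x\<in>#M. if y = x then f y else 0)"
    unfolding sum_unfold_sum_mset[of _ "set_mset M"] by (rule sum_mset.swap)
  also have "\<dots> = (\<Sum>y\<in>set_mset M. of_nat (count M y) * f y)"
    by (simp only: sum_mset_delta' mult_of_nat_commute)
  finally show ?thesis .
qed

definition unit_mat :: "nat \<Rightarrow> nat \<Rightarrow> nat \<Rightarrow> nat \<Rightarrow> int" where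
  "unit_mat a b p q = (if p = a \<and> q = b then 1 else 0)"

lemma laurent_mono_add:
  assumes "\<forall>i<n. \<forall>j<n. x i j \<noteq> 0"
  shows "laurent_mono n (\<lambda>p q. F p q + G p q) x = laurent_mono n F x * laurent_mono n G x"
  unfolding laurent_mono_def prod.distrib[symmetric]
  using assms by (intro prod.cong refl) (simp add: power_int_add)

lemma laurent_mono_unit_mat:
  assumes "a < n" "b < n"
  shows "laurent_mono n (unit_mat a b) x = x a b"
proof -
  have "laurent_mono n (unit_mat a b) x = (\<Prod>i<n. \<Prod>j<n. if i = a \<and> j = b then x i j else 1)"
    unfolding laurent_mono_def unit_mat_def by (intro prod.cong refl) auto
  also have "\<dots> = (\<Prod>i<n. if i = a then x i b else 1)"
    using assms by (intro prod.cong refl) auto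
  also have "\<dots> = x a b"
    using assms by simp
  finally show ?thesis .
qed

definition minor_monomial_val :: "minor multiset \<Rightarrow> (nat \<Rightarrow> nat \<Rightarrow> real) \<Rightarrow> real" where
  "minor_monomial_val m x = (\<Prod>\<mu>\<in>#m. minor_val \<mu> x)"

definition entry_monomial :: "nat \<Rightarrow> (nat \<Rightarrow> nat \<Rightarrow> int) \<Rightarrow> minor multiset" where
  "entry_monomial n F = (\<Sum>p<n. \<Sum>q<n. replicate_mset (nat (F p q)) (Minor1 p q))"

lemma valid_minor_entry_monomial: "\<mu> \<in># entry_monomial n F \<Longrightarrow> valid_minor n \<mu>"
  by (auto simp: entry_monomial_def set_mset_sum split: if_splits)

lemma minor_monomial_val_add:
  "minor_monomial_val (m + m') x = minor_monomial_val m x * minor_monomial_val m' x"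
  by (simp add: minor_monomial_val_def)

lemma minor_monomial_val_entry_monomial:
  assumes "\<forall>i<n. \<forall>j<n. F i j \<ge> 0"
  shows "minor_monomial_val (entry_monomial n F) x = laurent_mono n F x"
  unfolding minor_monomial_val_def entry_monomial_def laurent_mono_def prod_mset_image_sum
  using assms by (intro prod.cong refl) (simp add: power_int_def)

lemma laurent_mono_eq_mult_entry_monomial:
  assumes "\<forall>i<n. \<forall>j<n. x i j \<noteq> 0" and "\<forall>i<n. \<forall>j<n. C i j \<le> C' i j"
  shows "laurent_mono n C' x
           = laurent_mono n C x * minor_monomial_val (entry_monomial n (\<lambda>i j. C' i j - C i j)) x"
proof -
  have "laurent_mono n C' x = laurent_mono n (\<lambda>i j. C i j + (C' i j - C i j)) x"
    by simp
  also have "\<dots> = laurent_mono n C x * laurent_mono n (\<lambda>i j. C' i j - C i j) x"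
    using assms(1) by (rule laurent_mono_add)
  finally show ?thesis
    using assms(2) by (simp add: minor_monomial_val_entry_monomial)
qed

text \<open>
  A polynomial in the minors is represented by the multiset P of its monomials, each a multiset
  of minors; coefficients are multiplicities (see minor_poly_val_count).
\<close>
definition minor_factorable :: "nat \<Rightarrow> ((nat \<Rightarrow> nat \<Rightarrow> real) \<Rightarrow> real) \<Rightarrow> bool" where
  "minor_factorable n f \<longleftrightarrow> (\<exists>C P.
     (\<forall>i<n. \<forall>j<n. C i j \<ge> -1) \<and>
     (\<forall>m\<in>#P. m \<noteq> {#} \<and> (\<forall>\<mu>\<in>#m. valid_minor n \<mu>)) \<and>
     (\<forall>x. (\<forall>i<n. \<forall>j<n. x i j \<noteq> 0) \<longrightarrow>
        f x = laurent_mono n C x * (\<Sum>m\<in>#P. minor_monomial_val m x)))"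

lemma minor_factorable_cong:
  assumes "minor_factorable n f" and "\<And>x. \<forall>i<n. \<forall>j<n. x i j \<noteq> 0 \<Longrightarrow> f x = g x"
  shows "minor_factorable n g"
  using assms unfolding minor_factorable_def by metis

lemma minor_factorable_zero: "minor_factorable n (\<lambda>x. 0)"
  unfolding minor_factorable_def by (intro exI[of _ "\<lambda>_ _. 0"] exI[of _ "{#}"]) simp

lemma minor_factorable_minor2:
  assumes "Suc i < n" "Suc j < n" and "\<forall>p<n. \<forall>q<n. E p q \<ge> -1"
  shows "minor_factorable n (\<lambda>x. laurent_mono n E x * minor_val (Minor2 i j) x)"
  unfolding minor_factorable_def using assms
  by (intro exI[of _ E] exI[of _ "{#{#Minor2 i j#}#}"]) (simp add: minor_monomial_val_def)

lemma minor_factorable_add: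
  assumes "minor_factorable n f" and "minor_factorable n g"
  shows "minor_factorable n (\<lambda>x. f x + g x)"
proof -
  obtain C1 P1 where C1: "\<forall>i<n. \<forall>j<n. C1 i j \<ge> -1"
    and P1: "\<forall>m\<in>#P1. m \<noteq> {#} \<and> (\<forall>\<mu>\<in>#m. valid_minor n \<mu>)"
    and f: "\<forall>x. (\<forall>i<n. \<forall>j<n. x i j \<noteq> 0) \<longrightarrow>
              f x = laurent_mono n C1 x * (\<Sum>m\<in>#P1. minor_monomial_val m x)"
    using assms(1) unfolding minor_factorable_def by blast
  obtain C2 P2 where C2: "\<forall>i<n. \<forall>j<n. C2 i j \<ge> -1"
    and P2: "\<forall>m\<in>#P2. m \<noteq> {#} \<and> (\<forall>\<mu>\<in>#m. valid_minor n \<mu>)"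
    and g: "\<forall>x. (\<forall>i<n. \<forall>j<n. x i j \<noteq> 0) \<longrightarrow>
              g x = laurent_mono n C2 x * (\<Sum>m\<in>#P2. minor_monomial_val m x)"
    using assms(2) unfolding minor_factorable_def by blast
  define C where "C i j = min (C1 i j) (C2 i j)" for i j
  define shift where
    "shift C' P = image_mset (\<lambda>m. m + entry_monomial n (\<lambda>i j. C' i j - C i j)) P" for C' P
  have shift_val: "laurent_mono n C' x * (\<Sum>m\<in>#P. minor_monomial_val m x)
      = laurent_mono n C x * (\<Sum>m\<in>#shift C' P. minor_monomial_val m x)"
    if "\<forall>i<n. \<forall>j<n. x i j \<noteq> 0" "\<forall>i<n. \<forall>j<n. C i j \<le> C' i j" for C' P x
    unfolding laurent_mono_eq_mult_entry_monomial[OF that] shift_def image_mset.compositionality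
      comp_def minor_monomial_val_add sum_mset_distrib_right[symmetric]
    by (simp add: mult_ac)
  have "\<forall>m\<in>#shift C1 P1 + shift C2 P2. m \<noteq> {#} \<and> (\<forall>\<mu>\<in>#m. valid_minor n \<mu>)"
    using P1 P2 by (auto simp: shift_def dest: valid_minor_entry_monomial)
  moreover have "f x + g x = laurent_mono n C x *
      (\<Sum>m\<in>#shift C1 P1 + shift C2 P2. minor_monomial_val m x)"
    if "\<forall>i<n. \<forall>j<n. x i j \<noteq> 0" for x
    using f g that shift_val[OF that, of C1 P1] shift_val[OF that, of C2 P2]
    by (simp add: C_def distrib_left)
  moreover have "\<forall>i<n. \<forall>j<n. C i j \<ge> -1"
    using C1 C2 by (simp add: C_def)
  ultimately show ?thesis
    unfolding minor_factorable_def by blast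
qed

lemma minor_poly_val_count: "minor_poly_val (count P) x = (\<Sum>m\<in>#P. minor_monomial_val m x)"
  unfolding minor_poly_val_def sum_mset_image_eq_sum_count minor_monomial_val_def
  by (simp add: count_eq_zero_iff)

lemma good_minor_poly_count:
  assumes "\<forall>m\<in>#P. m \<noteq> {#} \<and> (\<forall>\<mu>\<in>#m. valid_minor n \<mu>)"
  shows "good_minor_poly n (count P)"
  using assms by (auto simp: good_minor_poly_def count_eq_zero_iff)

definition row_prefix_sum :: "(nat \<Rightarrow> nat \<Rightarrow> int) \<Rightarrow> nat \<Rightarrow> nat \<Rightarrow> int" where
  "row_prefix_sum A i j = (\<Sum>q\<le>j. A i q)"

definition col_prefix_sum :: "(nat \<Rightarrow> nat \<Rightarrow> int) \<Rightarrow> nat \<Rightarrow> nat \<Rightarrow> int" where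
  "col_prefix_sum A i j = (\<Sum>p\<le>i. A p j)"

lemma row_prefix_sum_add:
  "row_prefix_sum (\<lambda>p q. A p q + E p q) i j = row_prefix_sum A i j + row_prefix_sum E i j"
  unfolding row_prefix_sum_def by (simp add: sum.distrib)

lemma col_prefix_sum_add:
  "col_prefix_sum (\<lambda>p q. A p q + E p q) i j = col_prefix_sum A i j + col_prefix_sum E i j"
  unfolding col_prefix_sum_def by (simp add: sum.distrib)

lemma corner_sum_add: "corner_sum (\<lambda>p q. A p q + E p q) i j = corner_sum A i j + corner_sum E i j"
  unfolding corner_sum_def by (simp add: sum.distrib)

lemma corner_sum_0_row: "corner_sum A 0 j = row_prefix_sum A 0 j"
  unfolding corner_sum_def row_prefix_sum_def by simp

lemma corner_sum_0_col: "corner_sum A i 0 = col_prefix_sum A i 0"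
  unfolding corner_sum_def col_prefix_sum_def by simp

lemma corner_sum_Suc_row: "corner_sum A (Suc i) j = corner_sum A i j + row_prefix_sum A (Suc i) j"
  unfolding corner_sum_def row_prefix_sum_def by simp

lemma corner_sum_Suc_col: "corner_sum A i (Suc j) = corner_sum A i j + col_prefix_sum A i (Suc j)"
  unfolding corner_sum_def col_prefix_sum_def by (simp add: sum.distrib)

lemma entry_mem_if_row_prefix_sums:
  assumes "\<forall>i<n. \<forall>j<n. row_prefix_sum A i j \<in> {0, 1}" and "i < n" "j < n"
  shows "A i j \<in> {-1, 0, 1}"
proof (cases j)
  case 0
  then show ?thesis
    using assms by (force simp: row_prefix_sum_def)
next
  case (Suc j')
  then have "A i j = row_prefix_sum A i j - row_prefix_sum A i j'"
    by (simp add: row_prefix_sum_def)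
  moreover have "row_prefix_sum A i j \<in> {0, 1}" "row_prefix_sum A i j' \<in> {0, 1}"
    using assms Suc by auto
  ultimately show ?thesis
    by auto
qed

lemma is_ASM_row_prefix_sum:
  "is_ASM n A \<Longrightarrow> i < n \<Longrightarrow> j < n \<Longrightarrow> row_prefix_sum A i j \<in> {0, 1}"
  unfolding is_ASM_def row_prefix_sum_def by blast

lemma is_ASM_col_prefix_sum:
  "is_ASM n A \<Longrightarrow> i < n \<Longrightarrow> j < n \<Longrightarrow> col_prefix_sum A i j \<in> {0, 1}"
  unfolding is_ASM_def col_prefix_sum_def by blast

lemma is_ASM_corner_sum_last_row:
  assumes "is_ASM n A" and "j < n"
  shows "corner_sum A (n - 1) j = int j + 1"
proof -
  have "corner_sum A (n - 1) j = (\<Sum>q\<le>j. \<Sum>p<n. A p q)"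
    using assms(2) unfolding corner_sum_def lessThan_Suc_atMost[symmetric]
    by (simp add: sum.swap[of _ "{..<n}"])
  also have "\<dots> = (\<Sum>q\<le>j. 1)"
    using assms unfolding is_ASM_def by auto
  finally show ?thesis
    by simp
qed

lemma is_ASM_corner_sum_last_col:
  assumes "is_ASM n A" and "i < n"
  shows "corner_sum A i (n - 1) = int i + 1"
proof -
  have "corner_sum A i (n - 1) = (\<Sum>p\<le>i. \<Sum>q<n. A p q)"
    using assms(2) unfolding corner_sum_def lessThan_Suc_atMost[symmetric] by simp
  also have "\<dots> = (\<Sum>p\<le>i. 1)"
    using assms unfolding is_ASM_def by auto
  finally show ?thesis
    by simp
qed

lemma is_ASM_eq_if_corner_sum_eq:
  assumes "is_ASM n A" "is_ASM n B" and "\<forall>p<n. \<forall>q<n. corner_sum A p q = corner_sum B p q"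
  shows "A = B"
proof -
  have rows: "row_prefix_sum A p q = row_prefix_sum B p q" if "p < n" "q < n" for p q
  proof (cases p)
    case 0
    then show ?thesis
      using assms(3) that by (simp flip: corner_sum_0_row)
  next
    case (Suc p')
    then show ?thesis
      using assms(3) that corner_sum_Suc_row[of A p' q] corner_sum_Suc_row[of B p' q] by simp
  qed
  have "A p q = B p q" if "p < n" "q < n" for p q
  proof (cases q)
    case 0
    then show ?thesis
      using rows[OF that] by (simp add: row_prefix_sum_def)
  next
    case (Suc q')
    then show ?thesis
      using rows[OF that] rows[of p q'] that by (simp add: row_prefix_sum_def)
  qed
  moreover have "A p q = B p q" if "\<not> (p < n \<and> q < n)" for p q
    using assms(1,2) that unfolding is_ASM_def by auto
  ultimately show ?thesis
    by blast
qed

definition basic_move :: "nat \<Rightarrow> nat \<Rightarrow> nat \<Rightarrow> nat \<Rightarrow> int" where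
  "basic_move i j p q =
     unit_mat i (Suc j) p q + unit_mat (Suc i) j p q - unit_mat i j p q - unit_mat (Suc i) (Suc j) p q"

lemma sum_atMost_unit_mat_row: "(\<Sum>q\<le>j. unit_mat a b p q) = (if p = a \<and> b \<le> j then 1 else 0)"
  by (cases "p = a") (auto simp: unit_mat_def)

lemma sum_lessThan_unit_mat_row: "(\<Sum>q<j. unit_mat a b p q) = (if p = a \<and> b < j then 1 else 0)"
  by (cases "p = a") (auto simp: unit_mat_def)

lemma sum_atMost_unit_mat_col: "(\<Sum>p\<le>i. unit_mat a b p q) = (if q = b \<and> a \<le> i then 1 else 0)"
  by (cases "q = b") (auto simp: unit_mat_def)

lemma sum_lessThan_unit_mat_col: "(\<Sum>p<i. unit_mat a b p q) = (if q = b \<and> a < i then 1 else 0)"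
  by (cases "q = b") (auto simp: unit_mat_def)

lemma row_prefix_sum_basic_move:
  "row_prefix_sum (basic_move i j) p q =
     (if p = Suc i \<and> q = j then 1 else if p = i \<and> q = j then -1 else 0)"
  unfolding row_prefix_sum_def basic_move_def
  by (simp add: sum.distrib sum_subtractf sum_atMost_unit_mat_row)

lemma col_prefix_sum_basic_move:
  "col_prefix_sum (basic_move i j) p q =
     (if p = i \<and> q = Suc j then 1 else if p = i \<and> q = j then -1 else 0)"
  unfolding col_prefix_sum_def basic_move_def
  by (simp add: sum.distrib sum_subtractf sum_atMost_unit_mat_col)

lemma corner_sum_basic_move: "corner_sum (basic_move i j) p q = (if p = i \<and> q = j then -1 else 0)"
proof -
  have "corner_sum (unit_mat a b) p q = (if a \<le> p \<and> b \<le> q then 1 else 0)" for a b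
    unfolding corner_sum_def sum_atMost_unit_mat_row by (cases "b \<le> q") auto
  then show ?thesis
    unfolding corner_sum_def basic_move_def
    by (simp add: sum.distrib sum_subtractf flip: corner_sum_def) auto
qed

lemma is_ASM_add_basic_move:
  assumes A: "is_ASM n A" and "Suc i < n" "Suc j < n"
    and "row_prefix_sum A i j = 1" "col_prefix_sum A i j = 1"
    and "row_prefix_sum A (Suc i) j = 0" "col_prefix_sum A i (Suc j) = 0"
  shows "is_ASM n (\<lambda>p q. A p q + basic_move i j p q)" (is "is_ASM n ?A'")
proof -
  have rows: "\<forall>p<n. \<forall>q<n. row_prefix_sum ?A' p q \<in> {0, 1}"
    using assms is_ASM_row_prefix_sum[OF A]
    by (auto simp: row_prefix_sum_add row_prefix_sum_basic_move)
  have cols: "\<forall>p<n. \<forall>q<n. col_prefix_sum ?A' p q \<in> {0, 1}"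
    using assms is_ASM_col_prefix_sum[OF A]
    by (auto simp: col_prefix_sum_add col_prefix_sum_basic_move)
  have outside: "\<forall>p q. (p \<ge> n \<or> q \<ge> n) \<longrightarrow> ?A' p q = 0"
    using assms unfolding is_ASM_def basic_move_def unit_mat_def by auto
  have row_totals: "\<forall>p<n. (\<Sum>q<n. ?A' p q) = 1"
    using assms unfolding is_ASM_def basic_move_def
    by (simp add: sum.distrib sum_subtractf sum_lessThan_unit_mat_row)
  have col_totals: "\<forall>q<n. (\<Sum>p<n. ?A' p q) = 1"
    using assms unfolding is_ASM_def basic_move_def
    by (simp add: sum.distrib sum_subtractf sum_lessThan_unit_mat_col)
  show ?thesis
    unfolding is_ASM_def
    using outside row_totals col_totals entry_mem_if_row_prefix_sums[OF rows] rows cols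
    unfolding row_prefix_sum_def col_prefix_sum_def by blast
qed

definition excess_rank ::
    "(nat \<Rightarrow> nat \<Rightarrow> int) \<Rightarrow> (nat \<Rightarrow> nat \<Rightarrow> int) \<Rightarrow> nat \<Rightarrow> nat \<Rightarrow> int \<times> int \<times> int" where
  "excess_rank A B p q = (corner_sum A p q - corner_sum B p q, corner_sum A p q, - int (p + q))"

text \<open>
  At a position of maximal rank (in the lexicographic order) each failure of the hypotheses
  of is_ASM_add_basic_move would exhibit a neighbouring position of higher rank.
\<close>
definition max_excess_position ::
    "nat \<Rightarrow> (nat \<Rightarrow> nat \<Rightarrow> int) \<Rightarrow> (nat \<Rightarrow> nat \<Rightarrow> int) \<Rightarrow> nat \<Rightarrow> nat \<Rightarrow> bool" where
  "max_excess_position n A B i j \<longleftrightarrow>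
     i < n \<and> j < n \<and> corner_sum B i j < corner_sum A i j \<and>
     (\<forall>p<n. \<forall>q<n. corner_sum B p q < corner_sum A p q
        \<longrightarrow> excess_rank A B p q \<le> excess_rank A B i j)"

lemma exists_max_excess_position:
  assumes "i0 < n" "j0 < n" "corner_sum B i0 j0 < corner_sum A i0 j0"
  obtains i j where "max_excess_position n A B i j"
proof -
  define S where "S = {(p, q). p < n \<and> q < n \<and> corner_sum B p q < corner_sum A p q}"
  have "finite S"
    unfolding S_def by (rule finite_subset[of _ "{..<n} \<times> {..<n}"]) auto
  moreover have "S \<noteq> {}"
    using assms unfolding S_def by auto
  ultimately obtain i j where "(i, j) \<in> S"
    and ij_max: "Max (case_prod (excess_rank A B) ` S) = excess_rank A B i j"
    by (metis (mono_tags, lifting) obtains_MAX case_prod_conv surj_pair)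
  have "excess_rank A B p q \<le> excess_rank A B i j"
    if "p < n" "q < n" "corner_sum B p q < corner_sum A p q" for p q
  proof -
    have "excess_rank A B p q \<le> Max (case_prod (excess_rank A B) ` S)"
      using \<open>finite S\<close> that by (intro Max_ge) (auto simp: S_def intro: rev_image_eqI)
    then show ?thesis
      unfolding ij_max .
  qed
  with \<open>(i, j) \<in> S\<close> have "max_excess_position n A B i j"
    unfolding max_excess_position_def S_def by auto
  then show ?thesis
    by (rule that)
qed

lemma max_excess_position_no_better:
  assumes "max_excess_position n A B i j" and "p < n" "q < n"
    and "corner_sum A i j - corner_sum B i j \<le> corner_sum A p q - corner_sum B p q"
    and "corner_sum A i j < corner_sum A p q \<or> corner_sum A i j = corner_sum A p q \<and> p + q < i + j"
  shows False
proof -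
  have "excess_rank A B p q \<le> excess_rank A B i j"
    using assms unfolding max_excess_position_def by auto
  then show False
    using assms(4,5) unfolding excess_rank_def by auto
qed

lemma max_excess_position_Suc_less:
  assumes A: "is_ASM n A" and B: "is_ASM n B" and ij: "max_excess_position n A B i j"
  shows "Suc i < n" "Suc j < n"
proof -
  have "i < n" "j < n" "corner_sum B i j < corner_sum A i j"
    using ij unfolding max_excess_position_def by auto
  then show "Suc i < n" "Suc j < n"
    using is_ASM_corner_sum_last_row[OF A, of j] is_ASM_corner_sum_last_row[OF B, of j]
      is_ASM_corner_sum_last_col[OF A, of i] is_ASM_corner_sum_last_col[OF B, of i]
    by (metis Suc_lessI diff_Suc_1 less_irrefl)+
qed

lemma max_excess_position_row_prefix_sums:
  assumes A: "is_ASM n A" and B: "is_ASM n B" and ij: "max_excess_position n A B i j"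
  shows "row_prefix_sum A i j = 1" "row_prefix_sum A (Suc i) j = 0"
proof -
  have i: "i < n" and j: "j < n" and excess: "corner_sum B i j < corner_sum A i j"
    using ij unfolding max_excess_position_def by auto
  have rows: "row_prefix_sum A p q \<in> {0, 1}" "row_prefix_sum B p q \<in> {0, 1}"
    if "p < n" "q < n" for p q
    using is_ASM_row_prefix_sum[OF A that] is_ASM_row_prefix_sum[OF B that] by auto
  show "row_prefix_sum A i j = 1"
  proof (cases i)
    case 0
    then show ?thesis
      using rows[OF i j] excess by (auto simp: corner_sum_0_row)
  next
    case (Suc i')
    then show ?thesis
      using rows[OF i j] excess max_excess_position_no_better[OF ij, of i' j] i j
      by (auto simp: corner_sum_Suc_row)
  qed
  have "Suc i < n"
    using max_excess_position_Suc_less[OF A B ij] by simp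
  then show "row_prefix_sum A (Suc i) j = 0"
    using rows[of "Suc i" j] max_excess_position_no_better[OF ij, of "Suc i" j] j
    by (auto simp: corner_sum_Suc_row)
qed

lemma max_excess_position_col_prefix_sums:
  assumes A: "is_ASM n A" and B: "is_ASM n B" and ij: "max_excess_position n A B i j"
  shows "col_prefix_sum A i j = 1" "col_prefix_sum A i (Suc j) = 0"
proof -
  have i: "i < n" and j: "j < n" and excess: "corner_sum B i j < corner_sum A i j"
    using ij unfolding max_excess_position_def by auto
  have cols: "col_prefix_sum A p q \<in> {0, 1}" "col_prefix_sum B p q \<in> {0, 1}"
    if "p < n" "q < n" for p q
    using is_ASM_col_prefix_sum[OF A that] is_ASM_col_prefix_sum[OF B that] by auto
  show "col_prefix_sum A i j = 1"
  proof (cases j)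
    case 0
    then show ?thesis
      using cols[OF i j] excess by (auto simp: corner_sum_0_col)
  next
    case (Suc j')
    then show ?thesis
      using cols[OF i j] excess max_excess_position_no_better[OF ij, of i j'] i j
      by (auto simp: corner_sum_Suc_col)
  qed
  have "Suc j < n"
    using max_excess_position_Suc_less[OF A B ij] by simp
  then show "col_prefix_sum A i (Suc j) = 0"
    using cols[of i "Suc j"] max_excess_position_no_better[OF ij, of i "Suc j"] i
    by (auto simp: corner_sum_Suc_col)
qed

lemma laurent_mono_diff_basic_move:
  assumes x: "\<forall>i<n. \<forall>j<n. x i j \<noteq> 0" and "Suc i < n" "Suc j < n"
  shows "laurent_mono n A x - laurent_mono n (\<lambda>p q. A p q + basic_move i j p q) x
    = laurent_mono n (\<lambda>p q. A p q - unit_mat i j p q - unit_mat (Suc i) (Suc j) p q) x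
      * minor_val (Minor2 i j) x"
proof -
  define E where "E = (\<lambda>p q. A p q - unit_mat i j p q - unit_mat (Suc i) (Suc j) p q)"
  have units: "laurent_mono n (unit_mat p q) x = x p q" if "p \<le> Suc i" "q \<le> Suc j" for p q
    using assms that by (simp add: laurent_mono_unit_mat)
  have "A = (\<lambda>p q. E p q + (unit_mat i j p q + unit_mat (Suc i) (Suc j) p q))"
    unfolding E_def by (intro ext) linarith
  then have "laurent_mono n A x = laurent_mono n E x * (x i j * x (Suc i) (Suc j))"
    by (simp only: laurent_mono_add[OF x] units order.refl le_SucI)
  moreover have "(\<lambda>p q. A p q + basic_move i j p q)
      = (\<lambda>p q. E p q + (unit_mat i (Suc j) p q + unit_mat (Suc i) j p q))"
    unfolding E_def basic_move_def by (intro ext) linarith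
  then have "laurent_mono n (\<lambda>p q. A p q + basic_move i j p q) x
      = laurent_mono n E x * (x i (Suc j) * x (Suc i) j)"
    by (simp only: laurent_mono_add[OF x] units order.refl le_SucI)
  ultimately show ?thesis
    unfolding E_def by (simp add: right_diff_distrib)
qed

lemma minor_factorable_diff_basic_move:
  assumes A: "is_ASM n A" and A': "is_ASM n (\<lambda>p q. A p q + basic_move i j p q)"
    and ij: "Suc i < n" "Suc j < n"
  shows "minor_factorable n
    (\<lambda>x. laurent_mono n A x - laurent_mono n (\<lambda>p q. A p q + basic_move i j p q) x)"
proof -
  define E where "E = (\<lambda>p q. A p q - unit_mat i j p q - unit_mat (Suc i) (Suc j) p q)"
  have "E p q \<ge> -1" if "p < n" "q < n" for p q
  proof (cases "(p, q) = (i, j) \<or> (p, q) = (Suc i, Suc j)")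
    case True
    then have "E p q = A p q + basic_move i j p q"
      by (auto simp: E_def basic_move_def unit_mat_def)
    then show ?thesis
      using A' that unfolding is_ASM_def by fastforce
  next
    case False
    then have "E p q = A p q"
      by (auto simp: E_def unit_mat_def)
    then show ?thesis
      using A that unfolding is_ASM_def by fastforce
  qed
  then have "minor_factorable n (\<lambda>x. laurent_mono n E x * minor_val (Minor2 i j) x)"
    using ij by (intro minor_factorable_minor2) auto
  then show ?thesis
    by (rule minor_factorable_cong) (simp add: E_def laurent_mono_diff_basic_move ij)
qed

definition corner_excess ::
    "nat \<Rightarrow> (nat \<Rightarrow> nat \<Rightarrow> int) \<Rightarrow> (nat \<Rightarrow> nat \<Rightarrow> int) \<Rightarrow> nat" where
  "corner_excess n A B = (\<Sum>(p, q)\<in>{..<n} \<times> {..<n}. nat (corner_sum A p q - corner_sum B p q))"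

lemma minor_factorable_if_asm_le:
  assumes B: "is_ASM n B"
  shows "is_ASM n A \<Longrightarrow> asm_le n A B
    \<Longrightarrow> minor_factorable n (\<lambda>x. laurent_mono n A x - laurent_mono n B x)"
proof (induction "corner_excess n A B" arbitrary: A rule: less_induct)
  case less
  note A = less.prems(1) and A_le_B = less.prems(2)
  show ?case
  proof (cases "\<forall>p<n. \<forall>q<n. corner_sum A p q = corner_sum B p q")
    case True
    have "A = B"
      using A B True by (rule is_ASM_eq_if_corner_sum_eq)
    then show ?thesis
      using minor_factorable_zero by simp
  next
    case False
    then obtain i0 j0 where "i0 < n" "j0 < n" "corner_sum B i0 j0 < corner_sum A i0 j0"
      using A_le_B unfolding asm_le_def by (force simp: order.strict_iff_order)
    then obtain i j where ij: "max_excess_position n A B i j"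
      by (rule exists_max_excess_position)
    note Suc_less = max_excess_position_Suc_less[OF A B ij]
    define A' where "A' = (\<lambda>p q. A p q + basic_move i j p q)"
    have A': "is_ASM n A'"
      unfolding A'_def using A Suc_less
      by (rule is_ASM_add_basic_move)
        (use max_excess_position_row_prefix_sums[OF A B ij]
          max_excess_position_col_prefix_sums[OF A B ij] in auto)
    have "minor_factorable n (\<lambda>x. laurent_mono n A x - laurent_mono n A' x)"
      using A A' Suc_less unfolding A'_def by (rule minor_factorable_diff_basic_move)
    moreover have "minor_factorable n (\<lambda>x. laurent_mono n A' x - laurent_mono n B x)"
    proof (rule less.hyps)
      have corner_A': "corner_sum A' p q = corner_sum A p q - (if p = i \<and> q = j then 1 else 0)"
        for p q
        unfolding A'_def by (simp add: corner_sum_add corner_sum_basic_move)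
      have "i < n" "j < n" "corner_sum B i j < corner_sum A i j"
        using ij unfolding max_excess_position_def by auto
      then show "asm_le n A' B" "corner_excess n A' B < corner_excess n A B"
        using A_le_B unfolding asm_le_def corner_excess_def corner_A'
        by (auto intro!: sum_strict_mono_ex1)
    qed (fact A')
    ultimately have "minor_factorable n (\<lambda>x.
        (laurent_mono n A x - laurent_mono n A' x) + (laurent_mono n A' x - laurent_mono n B x))"
      by (rule minor_factorable_add)
    then show ?thesis
      by simp
  qed
qed

theorem mainTheorem14:
  fixes n :: nat and A B :: "nat \<Rightarrow> nat \<Rightarrow> int"
  assumes "is_ASM n A" and "is_ASM n B" and "asm_less n A B"
  shows "\<exists>(C :: nat \<Rightarrow> nat \<Rightarrow> int) (c :: minor multiset \<Rightarrow> nat).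
           (\<forall>i<n. \<forall>j<n. C i j \<ge> -1) \<and> good_minor_poly n c \<and>
           (\<forall>x :: nat \<Rightarrow> nat \<Rightarrow> real. (\<forall>i<n. \<forall>j<n. x i j \<noteq> 0) \<longrightarrow>
              laurent_mono n A x - laurent_mono n B x
                = laurent_mono n C x * minor_poly_val c x)"
proof -
  have "minor_factorable n (\<lambda>x. laurent_mono n A x - laurent_mono n B x)"
    using minor_factorable_if_asm_le[OF assms(2,1)] assms(3) unfolding asm_less_def by blast
  then obtain C P where C: "\<forall>i<n. \<forall>j<n. C i j \<ge> -1"
    and P: "\<forall>m\<in>#P. m \<noteq> {#} \<and> (\<forall>\<mu>\<in>#m. valid_minor n \<mu>)"
    and eq: "\<forall>x. (\<forall>i<n. \<forall>j<n. x i j \<noteq> 0) \<longrightarrow> laurent_mono n A x - laurent_mono n B x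
               = laurent_mono n C x * (\<Sum>m\<in>#P. minor_monomial_val m x)"
    unfolding minor_factorable_def by blast
  show ?thesis
  proof (intro exI conjI)
    show "good_minor_poly n (count P)"
      using P by (rule good_minor_poly_count)
    show "\<forall>x. (\<forall>i<n. \<forall>j<n. x i j \<noteq> 0) \<longrightarrow> laurent_mono n A x - laurent_mono n B x
        = laurent_mono n C x * minor_poly_val (count P) x"
      using eq by (simp add: minor_poly_val_count)
  qed (fact C)
qed

end
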